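(* Let $G=(V,E)$ be a connected simple graph with a set-valued metric $\Omega(-,-)$ taking values in subsets of a finite set $\Omega$, and let $v\mapsto -v$ be an involution on $V$ which is both equivariant and a graph automorphism of $G$. If $V$ contains an $\Omega$-accessible vertex $x_0$, then the diameter of $G$ is exactly $|\Omega|$.
   Context: For a connected simple graph $G=(V,E)$ and a set $\Omega$, a set-valued metric on $G$ is a function $\Omega(-,-):V\times V\to 2^{\Omega}$ such that $\Omega(x,y)=\Omega(y,x)$ for all $x,y$; $|\Omega(x,y)|=1$ whenever $\{x,y\}\in E$; and $\Omega(x,z)=\Omega(x,y)\triangle\Omega(y,z)$ for all $x,y,z$, where $\triangle$ is symmetric difference. An involution $x\mapsto -x$ on $V$ is equivariant if $\Omega(x,-y)=\Omega\setminus\Omega(x,y)$ for all $x,y$; it is a graph automorphism if it maps edges to edges. A vertex $x_0$ is $\Omega$-accessible if $d_G(x_0,y)=|\Omega(x_0,y)|$ for every $y\in V$, where $d_G$ is graph distance. *)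

theory Defs
  imports Main "HOL-Library.Extended_Nat"
begin

definition simple_graph :: "'a set \<Rightarrow> ('a \<Rightarrow> 'a \<Rightarrow> bool) \<Rightarrow> bool" where
  "simple_graph V E \<longleftrightarrow> (\<forall>x y. E x y \<longrightarrow> x \<in> V \<and> y \<in> V) \<and>
     (\<forall>x y. E x y \<longrightarrow> E y x) \<and> (\<forall>x. \<not> E x x)"

definition walk :: "('a \<Rightarrow> 'a \<Rightarrow> bool) \<Rightarrow> 'a \<Rightarrow> 'a \<Rightarrow> nat \<Rightarrow> bool" where
  "walk E x y n \<longleftrightarrow> (\<exists>p. p 0 = x \<and> p n = y \<and> (\<forall>i<n. E (p i) (p (Suc i))))"

definition connected_graph :: "'a set \<Rightarrow> ('a \<Rightarrow> 'a \<Rightarrow> bool) \<Rightarrow> bool" where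
  "connected_graph V E \<longleftrightarrow> V \<noteq> {} \<and> (\<forall>x\<in>V. \<forall>y\<in>V. \<exists>n. walk E x y n)"

definition graph_dist :: "('a \<Rightarrow> 'a \<Rightarrow> bool) \<Rightarrow> 'a \<Rightarrow> 'a \<Rightarrow> nat" where
  "graph_dist E x y = (LEAST n. walk E x y n)"

text \<open>Diameter: supremum of distances between vertices (in enat, to allow infinite graphs).\<close>
definition diameter :: "'a set \<Rightarrow> ('a \<Rightarrow> 'a \<Rightarrow> bool) \<Rightarrow> enat" where
  "diameter V E = (SUP x\<in>V. SUP y\<in>V. enat (graph_dist E x y))"

definition set_valued_metric ::
  "'a set \<Rightarrow> ('a \<Rightarrow> 'a \<Rightarrow> bool) \<Rightarrow> 'b set \<Rightarrow> ('a \<Rightarrow> 'a \<Rightarrow> 'b set) \<Rightarrow> bool" where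
  "set_valued_metric V E \<Omega> M \<longleftrightarrow>
     (\<forall>x\<in>V. \<forall>y\<in>V. M x y \<subseteq> \<Omega>) \<and>
     (\<forall>x\<in>V. \<forall>y\<in>V. M x y = M y x) \<and>
     (\<forall>x y. E x y \<longrightarrow> card (M x y) = 1) \<and>
     (\<forall>x\<in>V. \<forall>y\<in>V. \<forall>z\<in>V. M x z = M x y \<union> M y z - (M x y \<inter> M y z))"

definition involution_on :: "'a set \<Rightarrow> ('a \<Rightarrow> 'a) \<Rightarrow> bool" where
  "involution_on V neg \<longleftrightarrow> (\<forall>x\<in>V. neg x \<in> V \<and> neg (neg x) = x)"

definition equivariant ::
  "'a set \<Rightarrow> 'b set \<Rightarrow> ('a \<Rightarrow> 'a \<Rightarrow> 'b set) \<Rightarrow> ('a \<Rightarrow> 'a) \<Rightarrow> bool" where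
  "equivariant V \<Omega> M neg \<longleftrightarrow> (\<forall>x\<in>V. \<forall>y\<in>V. M x (neg y) = \<Omega> - M x y)"

definition graph_automorphism_map :: "('a \<Rightarrow> 'a \<Rightarrow> bool) \<Rightarrow> ('a \<Rightarrow> 'a) \<Rightarrow> bool" where
  "graph_automorphism_map E neg \<longleftrightarrow> (\<forall>x y. E x y \<longrightarrow> E (neg x) (neg y))"

definition accessible ::
  "'a set \<Rightarrow> ('a \<Rightarrow> 'a \<Rightarrow> bool) \<Rightarrow> ('a \<Rightarrow> 'a \<Rightarrow> 'b set) \<Rightarrow> 'a \<Rightarrow> bool" where
  "accessible V E M x0 \<longleftrightarrow> (\<forall>y\<in>V. graph_dist E x0 y = card (M x0 y))"

end

theory Submission
  imports Defs
begin

text \<open>Accessibility and equivariance give d(x0,y) + d(x0,-y) = |\<Omega>| for every vertex y, since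
  \<Omega>(x0,-y) is the complement of \<Omega>(x0,y); in particular d(x0,-x0) = |\<Omega>| because \<Omega>(x0,x0) is empty.
  Conversely, for vertices x, y with a = d(x0,x) and b = d(x0,y), routing through x0 gives
  d(x,y) \<le> a + b, while applying the involution and routing through x0 gives
  d(x,y) = d(-x,-y) \<le> (|\<Omega>| - a) + (|\<Omega>| - b); adding both bounds, d(x,y) \<le> |\<Omega>|.\<close>

lemma walk_append:
  assumes "walk E x y m" "walk E y z n"
  shows "walk E x z (m + n)"
proof -
  from assms obtain p q where p: "p 0 = x" "p m = y" "\<forall>i<m. E (p i) (p (Suc i))"
    and q: "q 0 = y" "q n = z" "\<forall>i<n. E (q i) (q (Suc i))"
    unfolding walk_def by blast
  define r where "r i = (if i \<le> m then p i else q (i - m))" for i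
  have "E (r i) (r (Suc i))" if "i < m + n" for i
  proof (cases "i < m")
    case True
    then show ?thesis using p by (simp add: r_def)
  next
    case False
    then have "Suc i - m = Suc (i - m)" by simp
    then show ?thesis using False q p that by (auto simp: r_def)
  qed
  moreover have "r 0 = x" "r (m + n) = z" using p q by (auto simp: r_def)
  ultimately show ?thesis unfolding walk_def by blast
qed

lemma walk_reverse:
  assumes "\<And>x y. E x y \<Longrightarrow> E y x" "walk E x y n"
  shows "walk E y x n"
proof -
  from assms(2) obtain p where p: "p 0 = x" "p n = y" "\<forall>i<n. E (p i) (p (Suc i))"
    unfolding walk_def by blast
  have "E (p (n - i)) (p (n - Suc i))" if "i < n" for i
  proof -
    have "Suc (n - Suc i) = n - i" using that by simp
    moreover have "E (p (n - Suc i)) (p (Suc (n - Suc i)))" using p(3) that by simp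
    ultimately show ?thesis using assms(1) by simp
  qed
  then show ?thesis using p unfolding walk_def by (intro exI[of _ "\<lambda>i. p (n - i)"]) auto
qed

lemma walk_image:
  assumes "\<And>x y. E x y \<Longrightarrow> E (f x) (f y)" "walk E x y n"
  shows "walk E (f x) (f y) n"
proof -
  from assms(2) obtain p where "p 0 = x" "p n = y" "\<forall>i<n. E (p i) (p (Suc i))"
    unfolding walk_def by blast
  then show ?thesis unfolding walk_def using assms(1) by (intro exI[of _ "f \<circ> p"]) auto
qed

lemma graph_dist_le: "walk E x y n \<Longrightarrow> graph_dist E x y \<le> n"
  unfolding graph_dist_def by (rule Least_le)

lemma walk_graph_dist:
  assumes "connected_graph V E" "x \<in> V" "y \<in> V"
  shows "walk E x y (graph_dist E x y)"
proof -
  obtain n where "walk E x y n" using assms unfolding connected_graph_def by blast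
  then show ?thesis unfolding graph_dist_def by (rule LeastI)
qed

lemma graph_dist_triangle:
  assumes "connected_graph V E" "x \<in> V" "y \<in> V" "z \<in> V"
  shows "graph_dist E x z \<le> graph_dist E x y + graph_dist E y z"
  using walk_append[OF walk_graph_dist[OF assms(1,2,3)] walk_graph_dist[OF assms(1,3,4)]]
  by (rule graph_dist_le)

lemma graph_dist_commute:
  assumes "simple_graph V E" "connected_graph V E" "x \<in> V" "y \<in> V"
  shows "graph_dist E x y = graph_dist E y x"
proof -
  have E_sym: "E u v \<Longrightarrow> E v u" for u v using assms(1) unfolding simple_graph_def by blast
  have "graph_dist E u v \<le> graph_dist E v u" if "u \<in> V" "v \<in> V" for u v
    by (rule graph_dist_le, rule walk_reverse[OF _ walk_graph_dist[OF assms(2) that(2,1)]]) (rule E_sym)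
  then show ?thesis using assms(3,4) by (simp add: antisym)
qed

lemma graph_dist_involution:
  assumes "connected_graph V E" "involution_on V f" "graph_automorphism_map E f"
    and "x \<in> V" "y \<in> V"
  shows "graph_dist E (f x) (f y) = graph_dist E x y"
proof -
  have hom: "E u v \<Longrightarrow> E (f u) (f v)" for u v
    using assms(3) unfolding graph_automorphism_map_def by blast
  have le: "graph_dist E (f u) (f v) \<le> graph_dist E u v" if "u \<in> V" "v \<in> V" for u v
    by (rule graph_dist_le, rule walk_image[OF _ walk_graph_dist[OF assms(1) that]]) (rule hom)
  have "f x \<in> V" "f y \<in> V" "f (f x) = x" "f (f y) = y"
    using assms(2,4,5) unfolding involution_on_def by auto
  then show ?thesis using le[of x y] le[of "f x" "f y"] assms(4,5) by simp
qed

lemma set_valued_metric_diag_empty: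
  assumes "set_valued_metric V E \<Omega> M" "x \<in> V"
  shows "M x x = {}"
proof -
  have "M x x = M x x \<union> M x x - (M x x \<inter> M x x)"
    using assms unfolding set_valued_metric_def by blast
  then show ?thesis by simp
qed

lemma accessible_antipodal_dist:
  assumes "finite \<Omega>" "set_valued_metric V E \<Omega> M" "involution_on V neg"
    and "equivariant V \<Omega> M neg" "accessible V E M x0" "x0 \<in> V" "y \<in> V"
  shows "graph_dist E x0 y + graph_dist E x0 (neg y) = card \<Omega>"
proof -
  have sub: "M x0 y \<subseteq> \<Omega>" using assms(2,6,7) unfolding set_valued_metric_def by blast
  have "neg y \<in> V" using assms(3,7) unfolding involution_on_def by blast
  then have "graph_dist E x0 (neg y) = card (\<Omega> - M x0 y)"
    using assms(4-7) unfolding accessible_def equivariant_def by simp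
  moreover have "graph_dist E x0 y = card (M x0 y)"
    using assms(5,7) unfolding accessible_def by simp
  ultimately show ?thesis
    using sub assms(1) by (simp add: card_Diff_subset card_mono finite_subset)
qed

lemma diameter_eq_enatI:
  assumes "\<And>x y. x \<in> V \<Longrightarrow> y \<in> V \<Longrightarrow> graph_dist E x y \<le> n"
    and "a \<in> V" "b \<in> V" "graph_dist E a b = n"
  shows "diameter V E = enat n"
  unfolding diameter_def
proof (rule antisym)
  show "(SUP x\<in>V. SUP y\<in>V. enat (graph_dist E x y)) \<le> enat n"
    using assms(1) by (intro SUP_least) simp
  show "enat n \<le> (SUP x\<in>V. SUP y\<in>V. enat (graph_dist E x y))"
    using assms(2-4) by (intro SUP_upper2[OF assms(2)] SUP_upper2[OF assms(3)]) simp
qed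

theorem proposition3p12:
  fixes V :: "'a set" and E :: "'a \<Rightarrow> 'a \<Rightarrow> bool"
    and \<Omega> :: "'b set" and M :: "'a \<Rightarrow> 'a \<Rightarrow> 'b set" and neg :: "'a \<Rightarrow> 'a"
  assumes "simple_graph V E" and "connected_graph V E"
    and "finite \<Omega>"
    and "set_valued_metric V E \<Omega> M"
    and "involution_on V neg"
    and "equivariant V \<Omega> M neg"
    and "graph_automorphism_map E neg"
    and "x0 \<in> V" and "accessible V E M x0"
  shows "diameter V E = enat (card \<Omega>)"
proof -
  note antipodal = accessible_antipodal_dist[OF assms(3,4,5,6,9,8)]
  have neg_in: "neg v \<in> V" if "v \<in> V" for v using assms(5) that unfolding involution_on_def by blast
  have "graph_dist E x y \<le> card \<Omega>" if x: "x \<in> V" and y: "y \<in> V" for x y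
  proof -
    have "graph_dist E x y \<le> graph_dist E x0 x + graph_dist E x0 y"
      using graph_dist_triangle[OF assms(2) x assms(8) y] graph_dist_commute[OF assms(1,2) x assms(8)]
      by simp
    moreover have "graph_dist E x y \<le> graph_dist E x0 (neg x) + graph_dist E x0 (neg y)"
      using graph_dist_involution[OF assms(2,5,7) x y]
        graph_dist_triangle[OF assms(2) neg_in[OF x] assms(8) neg_in[OF y]]
        graph_dist_commute[OF assms(1,2) neg_in[OF x] assms(8)]
      by simp
    ultimately show ?thesis using antipodal[OF x] antipodal[OF y] by linarith
  qed
  moreover have "graph_dist E x0 (neg x0) = card \<Omega>"
    using antipodal[OF assms(8)] assms(9,8) set_valued_metric_diag_empty[OF assms(4,8)]
    unfolding accessible_def by simp
  ultimately show ?thesis by (rule diameter_eq_enatI[OF _ assms(8) neg_in[OF assms(8)]])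
qed

end
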